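(* Let $X$ be a first-countable well-filtered space such that $\min(K)$ is countable for every $K\in\mathsf{K}(X)$. Then the upper Vietoris topology and the Scott topology on $\mathsf{K}(X)$ coincide.
   Context: Spaces are $T_0$; specialization order $x\le y$ iff $x\in\overline{\{y\}}$; saturated = upper set. $\mathsf{K}(X)$ = nonempty compact saturated subsets ordered by reverse inclusion; $\min(K)$ is the set of minimal points of $K$ in the specialization order. Scott topology on a poset: upper sets $U$ such that every directed $D$ with existing supremum in $U$ meets $U$. Upper Vietoris topology on $\mathsf{K}(X)$: base $\Box U=\{K:K\subseteq U\}$, $U$ open. Well-filtered: for open $U$ and $\mathcal K\subseteq\mathsf{K}(X)$ filtered under inclusion, $\bigcap\mathcal K\subseteq U$ implies some $K\in\mathcal K$ lies in $U$. *)

theory Defs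
  imports "HOL-Analysis.Analysis"
begin

definition spec_le :: "'a topology \<Rightarrow> 'a \<Rightarrow> 'a \<Rightarrow> bool" where
  "spec_le X x y \<longleftrightarrow> x \<in> topspace X \<and> y \<in> topspace X \<and> x \<in> X closure_of {y}"

definition saturated :: "'a topology \<Rightarrow> 'a set \<Rightarrow> bool" where
  "saturated X A \<longleftrightarrow> A \<subseteq> topspace X \<and>
     (\<forall>x \<in> A. \<forall>y \<in> topspace X. spec_le X x y \<longrightarrow> y \<in> A)"

definition KX :: "'a topology \<Rightarrow> 'a set set" where
  "KX X = {K. K \<noteq> {} \<and> compactin X K \<and> saturated X K}"

definition min_pts :: "'a topology \<Rightarrow> 'a set \<Rightarrow> 'a set" where
  "min_pts X K = {x \<in> K. \<forall>y \<in> K. spec_le X y x \<longrightarrow> y = x}"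

definition well_filtered :: "'a topology \<Rightarrow> bool" where
  "well_filtered X \<longleftrightarrow>
     (\<forall>U \<KK>. openin X U \<and> \<KK> \<subseteq> KX X \<and> \<KK> \<noteq> {} \<and>
        (\<forall>K1 \<in> \<KK>. \<forall>K2 \<in> \<KK>. \<exists>K3 \<in> \<KK>. K3 \<subseteq> K1 \<and> K3 \<subseteq> K2) \<and>
        \<Inter>\<KK> \<subseteq> U \<longrightarrow> (\<exists>K \<in> \<KK>. K \<subseteq> U))"

definition directed_in :: "'b set \<Rightarrow> ('b \<Rightarrow> 'b \<Rightarrow> bool) \<Rightarrow> 'b set \<Rightarrow> bool" where
  "directed_in P le D \<longleftrightarrow> D \<subseteq> P \<and> D \<noteq> {} \<and>
     (\<forall>a \<in> D. \<forall>b \<in> D. \<exists>c \<in> D. le a c \<and> le b c)"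

definition is_sup_in :: "'b set \<Rightarrow> ('b \<Rightarrow> 'b \<Rightarrow> bool) \<Rightarrow> 'b set \<Rightarrow> 'b \<Rightarrow> bool" where
  "is_sup_in P le D s \<longleftrightarrow> s \<in> P \<and> (\<forall>d \<in> D. le d s) \<and>
     (\<forall>u \<in> P. (\<forall>d \<in> D. le d u) \<longrightarrow> le s u)"

definition scott_open :: "'b set \<Rightarrow> ('b \<Rightarrow> 'b \<Rightarrow> bool) \<Rightarrow> 'b set \<Rightarrow> bool" where
  "scott_open P le U \<longleftrightarrow> U \<subseteq> P \<and>
     (\<forall>x \<in> U. \<forall>y \<in> P. le x y \<longrightarrow> y \<in> U) \<and>
     (\<forall>D s. directed_in P le D \<and> is_sup_in P le D s \<and> s \<in> U \<longrightarrow> D \<inter> U \<noteq> {})"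

definition K_le :: "'a set \<Rightarrow> 'a set \<Rightarrow> bool" where
  "K_le K1 K2 \<longleftrightarrow> K2 \<subseteq> K1"

definition upper_vietoris :: "'a topology \<Rightarrow> 'a set topology" where
  "upper_vietoris X = topology_generated_by {{K \<in> KX X. K \<subseteq> U} | U. openin X U}"

end

theory Submission
  imports Defs
begin

text \<open>Upper Vietoris open sets are Scott open in every well-filtered space: the supremum
  of a directed family in K(X) is its intersection, and well-filteredness says that a box
  Box U containing this intersection already contains a member of the family.

  Conversely, let \<open>\<U>\<close> be Scott open and \<open>K \<in> \<U>\<close>. By Zorn's lemma and compactness every
  point of K lies above a minimal point of K, so first countability and countability of
  min(K) give K a decreasing countable neighbourhood base \<open>D\<^sub>j\<close>. If no box Box \<open>D\<^sub>j\<close>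
  were contained in \<open>\<U>\<close>, choose \<open>A\<^sub>j \<subseteq> D\<^sub>j\<close> in K(X) outside \<open>\<U>\<close>. Then
  \<open>L\<^sub>k = K \<union> \<Union>\<^sub>j\<^sub>\<ge>\<^sub>k A\<^sub>j\<close> is a decreasing sequence in K(X) (compactness because the \<open>A\<^sub>j\<close>
  converge to K) whose intersection is K (because K is saturated), so Scott openness puts some
  \<open>L\<^sub>k\<close>, and with it \<open>A\<^sub>k \<subseteq> L\<^sub>k\<close>, into \<open>\<U>\<close>: a contradiction.\<close>

lemma spec_le_refl: "x \<in> topspace X \<Longrightarrow> spec_le X x x"
  using closure_of_subset[of "{x}" X] by (auto simp: spec_le_def)

lemma spec_le_iff_closure_of_subset:
  "spec_le X x y \<longleftrightarrow> x \<in> topspace X \<and> y \<in> topspace X \<and> X closure_of {x} \<subseteq> X closure_of {y}"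
  unfolding spec_le_def
  by (metis closure_of_closure_of closure_of_mono closure_of_subset empty_subsetI insert_subset subsetD)

lemma spec_le_trans: "spec_le X x y \<Longrightarrow> spec_le X y z \<Longrightarrow> spec_le X x z"
  unfolding spec_le_iff_closure_of_subset by blast

lemma openin_spec_le_upward: "openin X U \<Longrightarrow> x \<in> U \<Longrightarrow> spec_le X x y \<Longrightarrow> y \<in> U"
  by (auto simp: spec_le_def in_closure_of)

lemma spec_le_antisym: "t0_space X \<Longrightarrow> spec_le X x y \<Longrightarrow> spec_le X y x \<Longrightarrow> x = y"
  unfolding t0_space_def by (metis spec_le_def openin_spec_le_upward)

lemma compactin_chain_has_lower_bound:
  assumes K: "compactin X K" and C: "C \<subseteq> K" "C \<noteq> {}"
    and chain: "\<forall>a\<in>C. \<forall>b\<in>C. spec_le X a b \<or> spec_le X b a"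
  shows "\<exists>w\<in>K. \<forall>z\<in>C. spec_le X w z"
proof -
  have Ktop: "K \<subseteq> topspace X" using K compactin_subset_topspace by blast
  let ?\<C> = "(\<lambda>z. X closure_of {z}) ` C"
  \<comment> \<open>the closures of a chain are nested, so a finite subfamily intersects in one of them\<close>
  have "K \<inter> \<Inter>\<F> \<noteq> {}" if "finite \<F>" "\<F> \<subseteq> ?\<C>" for \<F>
  proof (cases "\<F> = {}")
    case True then show ?thesis using C by auto
  next
    case False
    have "subset.chain UNIV \<F>"
      using chain \<open>\<F> \<subseteq> ?\<C>\<close> unfolding subset.chain_def spec_le_iff_closure_of_subset by blast
    then have "\<Inter>\<F> \<in> \<F>" using Inter_in_chain \<open>finite \<F>\<close> False by blast
    then obtain z where "z \<in> C" "\<Inter>\<F> = X closure_of {z}" using \<open>\<F> \<subseteq> ?\<C>\<close> by auto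
    then have "z \<in> K \<inter> \<Inter>\<F>" using C Ktop closure_of_subset[of "{z}" X] by auto
    then show ?thesis by blast
  qed
  moreover have "\<forall>F\<in>?\<C>. closedin X F" by auto
  ultimately have "K \<inter> \<Inter>?\<C> \<noteq> {}" using K unfolding compactin_fip by blast
  then obtain w where "w \<in> K" "\<forall>z\<in>C. w \<in> X closure_of {z}" by blast
  then show ?thesis using C Ktop unfolding spec_le_def by blast
qed

lemma min_pts_below:
  assumes t0: "t0_space X" and K: "compactin X K" and y: "y \<in> K"
  shows "\<exists>m\<in>min_pts X K. spec_le X m y"
proof -
  have Ktop: "K \<subseteq> topspace X" using K compactin_subset_topspace by blast
  define A where "A = {z\<in>K. spec_le X z y}"
  define ge where "ge = (\<lambda>a b. spec_le X b a)"
  have "partial_order_on A (relation_of ge A)"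
    unfolding partial_order_on_def preorder_on_def refl_on_def trans_def antisym_def relation_of_def ge_def
    using Ktop spec_le_trans spec_le_antisym[OF t0] by (auto simp: A_def intro: spec_le_refl)
  moreover have "\<exists>u\<in>A. \<forall>a\<in>C. ge a u" if "C \<in> Chains (relation_of ge A)" for C
  proof (cases "C = {}")
    case True then show ?thesis using y Ktop spec_le_refl[of y X] by (auto simp: A_def)
  next
    case False
    have "C \<subseteq> A" "\<forall>a\<in>C. \<forall>b\<in>C. spec_le X a b \<or> spec_le X b a"
      using that unfolding Chains_def relation_of_def ge_def by auto
    moreover obtain w where "w \<in> K" "\<forall>z\<in>C. spec_le X w z"
      using compactin_chain_has_lower_bound[OF K _ False] calculation by (auto simp: A_def)
    ultimately show ?thesis
      using False spec_le_trans[of X w _ y] unfolding A_def ge_def by blast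
  qed
  ultimately obtain m where m: "m \<in> A" "\<forall>a\<in>A. ge m a \<longrightarrow> a = m"
    using predicate_Zorn by blast
  then have "m \<in> min_pts X K"
    using spec_le_trans[of X _ m y] by (auto simp: min_pts_def A_def ge_def)
  then show ?thesis using m(1) by (auto simp: A_def)
qed

lemma KX_subset_topspace: "K \<in> KX X \<Longrightarrow> K \<subseteq> topspace X"
  unfolding KX_def using compactin_subset_topspace by blast

lemma saturated_Union: "(\<And>A. A \<in> \<A> \<Longrightarrow> saturated X A) \<Longrightarrow> saturated X (\<Union>\<A>)"
  unfolding saturated_def by blast

lemma saturated_Inter: "(\<And>A. A \<in> \<A> \<Longrightarrow> saturated X A) \<Longrightarrow> \<A> \<noteq> {} \<Longrightarrow> saturated X (\<Inter>\<A>)"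
  unfolding saturated_def by blast

lemma saturated_subset_compl_closure_of:
  assumes "saturated X K" "y \<notin> K"
  shows "K \<subseteq> topspace X - X closure_of {y}"
proof
  fix x assume "x \<in> K"
  have "x \<notin> X closure_of {y}"
  proof
    assume "x \<in> X closure_of {y}"
    then have "y \<in> topspace X" by (auto simp: in_closure_of)
    with \<open>x \<in> K\<close> \<open>x \<in> X closure_of {y}\<close> have "y \<in> K"
      using assms(1) unfolding saturated_def spec_le_def by blast
    with assms(2) show False by contradiction
  qed
  then show "x \<in> topspace X - X closure_of {y}"
    using \<open>x \<in> K\<close> assms(1) unfolding saturated_def by blast
qed

lemma Inter_directed_in_KX:
  assumes wf: "well_filtered X" and D: "directed_in (KX X) K_le \<D>"
  shows "\<Inter>\<D> \<in> KX X"
proof -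
  have DK: "\<D> \<subseteq> KX X" "\<D> \<noteq> {}" and filt: "\<forall>A\<in>\<D>. \<forall>B\<in>\<D>. \<exists>C\<in>\<D>. C \<subseteq> A \<and> C \<subseteq> B"
    using D unfolding directed_in_def K_le_def by auto
  have wf': "\<exists>K\<in>\<D>. K \<subseteq> U" if "openin X U" "\<Inter>\<D> \<subseteq> U" for U
    using wf[unfolded well_filtered_def, rule_format, of U \<D>] that DK filt by blast
  have "\<Inter>\<D> \<noteq> {}"
  proof
    assume "\<Inter>\<D> = {}"
    then obtain K where "K \<in> \<D>" "K = {}" using wf'[of "{}"] openin_empty by blast
    then show False using DK by (auto simp: KX_def)
  qed
  moreover have "compactin X (\<Inter>\<D>)"
    unfolding compactin_def
  proof (intro conjI allI impI)
    show "\<Inter>\<D> \<subseteq> topspace X" using DK KX_subset_topspace by blast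
    fix \<U> assume \<U>: "(\<forall>U\<in>\<U>. openin X U) \<and> \<Inter>\<D> \<subseteq> \<Union>\<U>"
    moreover have "openin X (\<Union>\<U>)" using \<U> by auto
    ultimately obtain K where K: "K \<in> \<D>" "K \<subseteq> \<Union>\<U>" using wf' by blast
    then have "compactin X K" using DK by (auto simp: KX_def)
    then obtain \<F> where "finite \<F>" "\<F> \<subseteq> \<U>" "K \<subseteq> \<Union>\<F>"
      using \<U> K unfolding compactin_def by meson
    then show "\<exists>\<F>. finite \<F> \<and> \<F> \<subseteq> \<U> \<and> \<Inter>\<D> \<subseteq> \<Union>\<F>"
      using K by blast
  qed
  moreover have "saturated X (\<Inter>\<D>)"
    using DK by (intro saturated_Inter) (auto simp: KX_def)
  ultimately show ?thesis by (simp add: KX_def)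
qed

lemma is_sup_in_KX_Inter: "\<Inter>\<D> \<in> KX X \<Longrightarrow> is_sup_in (KX X) K_le \<D> (\<Inter>\<D>)"
  unfolding is_sup_in_def K_le_def by blast

lemma is_sup_in_KX_eq_Inter: "is_sup_in (KX X) K_le \<D> S \<Longrightarrow> \<Inter>\<D> \<in> KX X \<Longrightarrow> S = \<Inter>\<D>"
  unfolding is_sup_in_def K_le_def by blast

lemma scott_open_box:
  assumes wf: "well_filtered X" and U: "openin X U"
  shows "scott_open (KX X) K_le {K \<in> KX X. K \<subseteq> U}"
  unfolding scott_open_def
proof (intro conjI allI impI)
  fix \<D> S assume H: "directed_in (KX X) K_le \<D> \<and> is_sup_in (KX X) K_le \<D> S \<and> S \<in> {K \<in> KX X. K \<subseteq> U}"
  then have "\<Inter>\<D> \<subseteq> U" using Inter_directed_in_KX[OF wf] is_sup_in_KX_eq_Inter by blast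
  moreover have "\<D> \<subseteq> KX X" "\<D> \<noteq> {}" "\<forall>A\<in>\<D>. \<forall>B\<in>\<D>. \<exists>C\<in>\<D>. C \<subseteq> A \<and> C \<subseteq> B"
    using H unfolding directed_in_def K_le_def by auto
  ultimately obtain K where "K \<in> \<D>" "K \<subseteq> U"
    using wf[unfolded well_filtered_def, rule_format, of U \<D>] U by blast
  then show "\<D> \<inter> {K \<in> KX X. K \<subseteq> U} \<noteq> {}" using H unfolding directed_in_def by blast
qed (auto simp: K_le_def)

lemma scott_open_Int:
  assumes A: "scott_open P le A" and B: "scott_open P le B"
  shows "scott_open P le (A \<inter> B)"
  unfolding scott_open_def
proof (intro conjI allI impI)
  show "A \<inter> B \<subseteq> P" "\<forall>x\<in>A \<inter> B. \<forall>y\<in>P. le x y \<longrightarrow> y \<in> A \<inter> B"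
    using A B unfolding scott_open_def by blast+
next
  fix D s assume H: "directed_in P le D \<and> is_sup_in P le D s \<and> s \<in> A \<inter> B"
  obtain a b where "a \<in> D \<inter> A" "b \<in> D \<inter> B" using A B H unfolding scott_open_def by blast
  moreover obtain c where "c \<in> D" "le a c" "le b c" "c \<in> P"
    using H calculation unfolding directed_in_def by blast
  ultimately show "D \<inter> (A \<inter> B) \<noteq> {}" using A B unfolding scott_open_def by blast
qed

lemma scott_open_Union: "(\<And>A. A \<in> \<A> \<Longrightarrow> scott_open P le A) \<Longrightarrow> scott_open P le (\<Union>\<A>)"
  unfolding scott_open_def by blast

lemma upper_vietoris_open_imp_scott_open:
  assumes wf: "well_filtered X" and "openin (upper_vietoris X) \<U>"
  shows "scott_open (KX X) K_le \<U>"
proof -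
  have "generate_topology_on {{K \<in> KX X. K \<subseteq> U} | U. openin X U} \<U>"
    using assms(2) unfolding upper_vietoris_def by (simp add: openin_topology_generated_by_iff)
  then show ?thesis
  proof (induction rule: generate_topology_on.induct)
    case Empty then show ?case by (simp add: scott_open_def)
  next
    case (Int A B) then show ?case by (intro scott_open_Int)
  next
    case (UN \<A>) then show ?case by (intro scott_open_Union) blast
  next
    case (Basis S) then show ?case using scott_open_box[OF wf] by blast
  qed
qed

lemma upper_vietoris_open_box: "openin X U \<Longrightarrow> openin (upper_vietoris X) {K \<in> KX X. K \<subseteq> U}"
  unfolding upper_vietoris_def openin_topology_generated_by_iff
  by (rule generate_topology_on.Basis) blast

lemma decseq_nbhd_base_of_countable:
  assumes "countable \<V>" "\<V> \<noteq> {}" "\<forall>V\<in>\<V>. openin X V \<and> K \<subseteq> V"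
  shows "\<exists>D :: nat \<Rightarrow> 'a set. (\<forall>j. openin X (D j) \<and> K \<subseteq> D j) \<and> decseq D \<and> (\<forall>V\<in>\<V>. \<exists>j. D j \<subseteq> V)"
proof -
  define v where "v = from_nat_into \<V>"
  have v: "range v = \<V>" using assms(1,2) unfolding v_def by simp
  define D where "D j = \<Inter>(v ` {..j})" for j
  have "openin X (D j) \<and> K \<subseteq> D j" for j
    unfolding D_def using v assms(3) by (auto intro!: openin_Inter)
  moreover have "decseq D" unfolding D_def decseq_def by auto
  moreover have "\<exists>j. D j \<subseteq> V" if "V \<in> \<V>" for V
    using that v unfolding D_def by blast
  ultimately show ?thesis by blast
qed

lemma compactin_decseq_nbhd_base:
  assumes fc: "first_countable X" and K: "compactin X K"
    and M: "countable M" "M \<subseteq> K" and below: "\<forall>y\<in>K. \<exists>m\<in>M. spec_le X m y"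
  shows "\<exists>D :: nat \<Rightarrow> 'a set. (\<forall>j. openin X (D j) \<and> K \<subseteq> D j) \<and> decseq D
           \<and> (\<forall>W. openin X W \<and> K \<subseteq> W \<longrightarrow> (\<exists>j. D j \<subseteq> W))"
proof -
  have Ktop: "K \<subseteq> topspace X" using K compactin_subset_topspace by blast
  have "\<forall>x\<in>M. \<exists>B. countable B \<and> (\<forall>V\<in>B. openin X V)
      \<and> (\<forall>U. openin X U \<and> x \<in> U \<longrightarrow> (\<exists>V\<in>B. x \<in> V \<and> V \<subseteq> U))"
    using fc M(2) Ktop unfolding first_countable_def by (meson subsetD)
  then obtain B where B: "\<And>x. x \<in> M \<Longrightarrow> countable (B x) \<and> (\<forall>V\<in>B x. openin X V)
      \<and> (\<forall>U. openin X U \<and> x \<in> U \<longrightarrow> (\<exists>V\<in>B x. x \<in> V \<and> V \<subseteq> U))"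
    by metis
  define \<B> where "\<B> = (\<Union>x\<in>M. B x)"
  have \<B>_open: "\<forall>V\<in>\<B>. openin X V" unfolding \<B>_def using B by blast
  \<comment> \<open>only countably many finite unions of basic neighbourhoods of points of M are needed\<close>
  have cover: "\<exists>\<F>. finite \<F> \<and> \<F> \<subseteq> \<B> \<and> K \<subseteq> \<Union>\<F> \<and> \<Union>\<F> \<subseteq> W" if W: "openin X W" "K \<subseteq> W" for W
  proof -
    have "K \<subseteq> \<Union>{V\<in>\<B>. V \<subseteq> W}"
    proof
      fix y assume "y \<in> K"
      then obtain m where m: "m \<in> M" "spec_le X m y" using below by blast
      then obtain V where "V \<in> B m" "m \<in> V" "V \<subseteq> W" using B W M(2) by blast
      moreover have "y \<in> V" using openin_spec_le_upward[of X V m y] B m calculation by blast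
      ultimately show "y \<in> \<Union>{V\<in>\<B>. V \<subseteq> W}" using m unfolding \<B>_def by blast
    qed
    then obtain \<F> where "finite \<F>" "\<F> \<subseteq> {V\<in>\<B>. V \<subseteq> W}" "K \<subseteq> \<Union>\<F>"
      using K \<B>_open unfolding compactin_def by (metis (no_types, lifting) mem_Collect_eq)
    then show ?thesis by blast
  qed
  define \<V> where "\<V> = Union ` {\<F>. finite \<F> \<and> \<F> \<subseteq> \<B> \<and> K \<subseteq> \<Union>\<F>}"
  have "countable \<B>" unfolding \<B>_def using M(1) B by (blast intro: countable_UN)
  have "countable {\<F>. finite \<F> \<and> \<F> \<subseteq> \<B> \<and> K \<subseteq> \<Union>\<F>}"
    by (rule countable_subset[OF _ countable_Collect_finite_subset[OF \<open>countable \<B>\<close>]]) blast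
  then have "countable \<V>" unfolding \<V>_def by (rule countable_image)
  moreover have "\<V> \<noteq> {}"
  proof -
    obtain \<F> where "finite \<F>" "\<F> \<subseteq> \<B>" "K \<subseteq> \<Union>\<F>" using cover[OF openin_topspace Ktop] by meson
    then have "\<Union>\<F> \<in> \<V>" unfolding \<V>_def by (intro imageI) simp
    then show ?thesis by blast
  qed
  moreover have "\<forall>V\<in>\<V>. openin X V \<and> K \<subseteq> V"
    unfolding \<V>_def using \<B>_open by (blast intro: openin_Union)
  ultimately obtain D :: "nat \<Rightarrow> 'a set" where
    D: "\<forall>j. openin X (D j) \<and> K \<subseteq> D j" "decseq D" "\<forall>V\<in>\<V>. \<exists>j. D j \<subseteq> V"
    by (metis decseq_nbhd_base_of_countable)
  have "\<exists>j. D j \<subseteq> W" if W: "openin X W" "K \<subseteq> W" for W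
  proof -
    obtain \<F> where "finite \<F>" "\<F> \<subseteq> \<B>" "K \<subseteq> \<Union>\<F>" "\<Union>\<F> \<subseteq> W" using cover[OF W] by meson
    then have "\<Union>\<F> \<in> \<V>" unfolding \<V>_def by (intro imageI) simp
    then show ?thesis using D(3) \<open>\<Union>\<F> \<subseteq> W\<close> by blast
  qed
  with D(1,2) show ?thesis by (intro exI[of _ D]) blast
qed

lemma compactin_Un_tail:
  assumes K: "compactin X K" and A: "\<And>j. compactin X (A j)"
    and conv: "\<And>W. openin X W \<Longrightarrow> K \<subseteq> W \<Longrightarrow> \<forall>\<^sub>F j in sequentially. A j \<subseteq> W"
  shows "compactin X (K \<union> \<Union>(A ` {k..}))"
  unfolding compactin_def
proof (intro conjI allI impI)
  show "K \<union> \<Union>(A ` {k..}) \<subseteq> topspace X"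
    using K A compactin_subset_topspace by (metis UN_least Un_least)
  fix \<O> assume \<O>: "(\<forall>U\<in>\<O>. openin X U) \<and> K \<union> \<Union>(A ` {k..}) \<subseteq> \<Union>\<O>"
  obtain \<F> where \<F>: "finite \<F>" "\<F> \<subseteq> \<O>" "K \<subseteq> \<Union>\<F>"
    using K \<O> unfolding compactin_def by (meson le_sup_iff)
  have "openin X (\<Union>\<F>)" using \<F>(2) \<O> by (meson openin_Union subsetD)
  then have "\<forall>\<^sub>F j in sequentially. A j \<subseteq> \<Union>\<F>" using \<F>(3) by (intro conv)
  then obtain N where N: "\<And>j. N \<le> j \<Longrightarrow> A j \<subseteq> \<Union>\<F>"
    unfolding eventually_sequentially by blast
  have "compactin X (K \<union> \<Union>(A ` {k..<N}))"
    using K A by (intro compactin_Un compactin_Union) auto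
  moreover have "K \<union> \<Union>(A ` {k..<N}) \<subseteq> \<Union>\<O>" using \<O> by fastforce
  ultimately obtain \<G> where \<G>: "finite \<G>" "\<G> \<subseteq> \<O>" "K \<union> \<Union>(A ` {k..<N}) \<subseteq> \<Union>\<G>"
    using \<O> unfolding compactin_def by meson
  have "A j \<subseteq> \<Union>(\<F> \<union> \<G>)" if "k \<le> j" for j
  proof (cases "j < N")
    case True
    then have "A j \<subseteq> \<Union>(A ` {k..<N})" using that by auto
    then show ?thesis using \<G>(3) by blast
  qed (use N[of j] in auto)
  then have "K \<union> \<Union>(A ` {k..}) \<subseteq> \<Union>(\<F> \<union> \<G>)" using \<F>(3) by auto
  with \<F> \<G> show "\<exists>\<F>. finite \<F> \<and> \<F> \<subseteq> \<O> \<and> K \<union> \<Union>(A ` {k..}) \<subseteq> \<Union>\<F>"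
    by (intro exI[of _ "\<F> \<union> \<G>"]) auto
qed

lemma Inter_Un_tail_eq:
  assumes sat: "saturated X K"
    and conv: "\<And>W. openin X W \<Longrightarrow> K \<subseteq> W \<Longrightarrow> \<forall>\<^sub>F j in sequentially. A j \<subseteq> W"
  shows "(\<Inter>k. K \<union> \<Union>(A ` {k..})) = K"
proof (intro equalityI subsetI)
  fix y assume y: "y \<in> (\<Inter>k. K \<union> \<Union>(A ` {k..}))"
  show "y \<in> K"
  proof (rule ccontr)
    assume "y \<notin> K"
    then have "K \<subseteq> topspace X - X closure_of {y}"
      by (rule saturated_subset_compl_closure_of[OF sat])
    moreover have "openin X (topspace X - X closure_of {y})" by (simp add: openin_diff)
    ultimately have "\<forall>\<^sub>F j in sequentially. A j \<subseteq> topspace X - X closure_of {y}"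
      by (intro conv)
    then obtain N where N: "\<And>j. N \<le> j \<Longrightarrow> A j \<subseteq> topspace X - X closure_of {y}"
      unfolding eventually_sequentially by blast
    have "y \<in> K \<union> \<Union>(A ` {N..})" using y by (rule INT_D) simp
    then obtain j where "N \<le> j" "y \<in> A j" using \<open>y \<notin> K\<close> by auto
    with N have "y \<in> topspace X" "y \<notin> X closure_of {y}" by auto
    then show False using closure_of_subset[of "{y}" X] by auto
  qed
qed blast

lemma directed_in_KX_decseq:
  assumes "\<And>k. L k \<in> KX X" "decseq L"
  shows "directed_in (KX X) K_le (range L)"
  unfolding directed_in_def K_le_def
proof (intro conjI ballI)
  fix A B assume "A \<in> range L" "B \<in> range L"
  then obtain i j where "A = L i" "B = L j" by blast
  then show "\<exists>C\<in>range L. C \<subseteq> A \<and> C \<subseteq> B"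
    using decseqD[OF assms(2), of i "max i j"] decseqD[OF assms(2), of j "max i j"] by auto
qed (use assms in auto)

lemma scott_open_contains_box:
  assumes S: "scott_open (KX X) K_le \<U>" and K: "K \<in> \<U>"
    and D: "\<forall>j. openin X (D j) \<and> K \<subseteq> D j" "decseq D" "\<forall>W. openin X W \<and> K \<subseteq> W \<longrightarrow> (\<exists>j. D j \<subseteq> W)"
  shows "\<exists>j. {A \<in> KX X. A \<subseteq> D j} \<subseteq> \<U>"
proof (rule ccontr)
  assume "\<nexists>j. {A \<in> KX X. A \<subseteq> D j} \<subseteq> \<U>"
  then have "\<forall>j. \<exists>A. A \<in> KX X \<and> A \<subseteq> D j \<and> A \<notin> \<U>" by blast
  then obtain A where A: "\<And>j. A j \<in> KX X" "\<And>j. A j \<subseteq> D j" "\<And>j. A j \<notin> \<U>" by metis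
  have KK: "K \<in> KX X" using S K unfolding scott_open_def by blast
  have conv: "\<forall>\<^sub>F j in sequentially. A j \<subseteq> W" if W: "openin X W" "K \<subseteq> W" for W
  proof -
    obtain i where "D i \<subseteq> W" using D(3) W by blast
    then have "A j \<subseteq> W" if "i \<le> j" for j using A(2)[of j] decseqD[OF D(2) that] by blast
    then show ?thesis unfolding eventually_sequentially by blast
  qed
  define L where "L k = K \<union> \<Union>(A ` {k..})" for k
  have "L k \<in> KX X" for k
  proof -
    have "compactin X (L k)"
      unfolding L_def using KK A(1) conv by (intro compactin_Un_tail) (auto simp: KX_def)
    moreover have "saturated X (L k)"
      using saturated_Union[of "insert K (A ` {k..})" X] KK A(1) by (auto simp: L_def KX_def)
    ultimately show ?thesis using KK by (auto simp: KX_def L_def)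
  qed
  moreover have "decseq L" unfolding L_def decseq_def by auto
  ultimately have "directed_in (KX X) K_le (range L)" by (rule directed_in_KX_decseq)
  moreover have "is_sup_in (KX X) K_le (range L) K"
    using is_sup_in_KX_Inter[of "range L" X] Inter_Un_tail_eq[of X K A] KK conv
    by (simp add: L_def KX_def)
  ultimately obtain k where "L k \<in> \<U>" using S K unfolding scott_open_def by blast
  moreover have "A k \<subseteq> L k" by (auto simp: L_def)
  ultimately have "A k \<in> \<U>" using S A(1) unfolding scott_open_def K_le_def by blast
  with A(3) show False by blast
qed

theorem mainTheorem11:
  fixes X :: "'a topology"
  assumes "t0_space X"
    and "first_countable X"
    and "well_filtered X"
    and "\<forall>K \<in> KX X. countable (min_pts X K)"
  shows "\<forall>\<U>. openin (upper_vietoris X) \<U> \<longleftrightarrow> scott_open (KX X) K_le \<U>"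
proof (intro allI iffI)
  fix \<U> assume "openin (upper_vietoris X) \<U>"
  then show "scott_open (KX X) K_le \<U>" by (rule upper_vietoris_open_imp_scott_open[OF assms(3)])
next
  fix \<U> assume S: "scott_open (KX X) K_le \<U>"
  have "\<exists>\<V>. openin (upper_vietoris X) \<V> \<and> K \<in> \<V> \<and> \<V> \<subseteq> \<U>" if "K \<in> \<U>" for K
  proof -
    have K: "K \<in> KX X" using S \<open>K \<in> \<U>\<close> unfolding scott_open_def by blast
    then have "compactin X K" by (simp add: KX_def)
    moreover have "countable (min_pts X K)" using assms(4) K by blast
    moreover have "min_pts X K \<subseteq> K" by (auto simp: min_pts_def)
    moreover have "\<forall>y\<in>K. \<exists>m\<in>min_pts X K. spec_le X m y"
      using min_pts_below[OF assms(1) \<open>compactin X K\<close>] by blast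
    ultimately have "\<exists>D :: nat \<Rightarrow> 'a set. (\<forall>j. openin X (D j) \<and> K \<subseteq> D j) \<and> decseq D
        \<and> (\<forall>W. openin X W \<and> K \<subseteq> W \<longrightarrow> (\<exists>j. D j \<subseteq> W))"
      by (rule compactin_decseq_nbhd_base[OF assms(2)])
    then obtain D :: "nat \<Rightarrow> 'a set" where
      D: "\<forall>j. openin X (D j) \<and> K \<subseteq> D j" "decseq D" "\<forall>W. openin X W \<and> K \<subseteq> W \<longrightarrow> (\<exists>j. D j \<subseteq> W)"
      by blast
    then obtain j where "{A \<in> KX X. A \<subseteq> D j} \<subseteq> \<U>"
      using scott_open_contains_box[OF S \<open>K \<in> \<U>\<close>] by blast
    then show ?thesis
      using upper_vietoris_open_box[of X "D j"] K D(1) by blast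
  qed
  then show "openin (upper_vietoris X) \<U>" using openin_subopen by blast
qed

end
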